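(* Let $M_T(n)$ denote the maximum modulus of an independence root over all trees on $n$ vertices. Then $$\frac{\log_2(M_T(n))}{n}=\frac{1}{2}+o(1)\quad\text{as } n\to\infty.$$
   Context: For a finite simple graph $G$, the independence polynomial is $i(G,x)=\sum_{k\ge 0} i_k x^k$, where $i_k$ is the number of independent sets of size $k$ in $G$; its complex roots are the independence roots of $G$. *)

theory Defs
  imports "HOL-Analysis.Analysis" "HOL-Computational_Algebra.Polynomial"
begin

definition simple_graph :: "nat \<Rightarrow> (nat \<Rightarrow> nat \<Rightarrow> bool) \<Rightarrow> bool" where
  "simple_graph n E \<longleftrightarrow>
     (\<forall>u v. E u v \<longrightarrow> u < n \<and> v < n) \<and>
     (\<forall>u v. E u v \<longrightarrow> E v u) \<and> (\<forall>v. \<not> E v v)"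

definition connected_graph :: "nat \<Rightarrow> (nat \<Rightarrow> nat \<Rightarrow> bool) \<Rightarrow> bool" where
  "connected_graph n E \<longleftrightarrow> (\<forall>u<n. \<forall>v<n. (E\<^sup>*\<^sup>*) u v)"

definition has_cycle :: "(nat \<Rightarrow> nat \<Rightarrow> bool) \<Rightarrow> bool" where
  "has_cycle E \<longleftrightarrow> (\<exists>vs. length vs \<ge> 3 \<and> distinct vs \<and>
      (\<forall>i. Suc i < length vs \<longrightarrow> E (vs ! i) (vs ! Suc i)) \<and> E (last vs) (hd vs))"

definition is_tree :: "nat \<Rightarrow> (nat \<Rightarrow> nat \<Rightarrow> bool) \<Rightarrow> bool" where
  "is_tree n E \<longleftrightarrow> simple_graph n E \<and> connected_graph n E \<and> \<not> has_cycle E"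

definition independent_set :: "(nat \<Rightarrow> nat \<Rightarrow> bool) \<Rightarrow> nat set \<Rightarrow> bool" where
  "independent_set E S \<longleftrightarrow> (\<forall>u\<in>S. \<forall>v\<in>S. \<not> E u v)"

definition indep_poly :: "nat \<Rightarrow> (nat \<Rightarrow> nat \<Rightarrow> bool) \<Rightarrow> complex poly" where
  "indep_poly n E = (\<Sum>S\<in>{S. S \<subseteq> {0..<n} \<and> independent_set E S}. monom 1 (card S))"

definition M_T :: "nat \<Rightarrow> real" where
  "M_T n = Max {cmod z | z E. is_tree n E \<and> poly (indep_poly n E) z = 0}"

end

(* A tree is bipartite, so it has an independent set X with at least n/2 vertices. An
   independent set is determined by its trace outside X together with a few vertices of X,
   which bounds the coefficient of x^(a-j) in i(T,x), a the independence number, by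
   2^(n/2) n^j; a Cauchy-type root bound then gives |z| <= 2n 2^(n/2) for every root.
   Conversely, a spider with about n/2 legs has a unique maximum independent set and at least
   2^(n/2 - 2) independent sets of the next smaller size, so by Vieta one of its independence
   roots has modulus at least 2^(n/2 - 2)/n. Hence log2 M_T(n) = n/2 + O(log n). *)

theory Submission
  imports Defs "HOL-Computational_Algebra.Fundamental_Theorem_Algebra" "HOL-Real_Asymp.Real_Asymp"
begin

definition indep_sets :: "nat \<Rightarrow> (nat \<Rightarrow> nat \<Rightarrow> bool) \<Rightarrow> nat \<Rightarrow> nat set set" where
  "indep_sets n E k = {S. S \<subseteq> {0..<n} \<and> independent_set E S \<and> card S = k}"

lemma finite_indep_sets: "finite (indep_sets n E k)"
  unfolding indep_sets_def by (rule finite_subset[of _ "Pow {0..<n}"]) auto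

lemma coeff_indep_poly: "coeff (indep_poly n E) k = of_nat (card (indep_sets n E k))"
proof -
  let ?I = "{S. S \<subseteq> {0..<n} \<and> independent_set E S}"
  have fin: "finite ?I"
    by (rule finite_subset[of _ "Pow {0..<n}"]) auto
  have "coeff (indep_poly n E) k = (\<Sum>S\<in>?I. if card S = k then 1 else 0)"
    unfolding indep_poly_def by (simp add: coeff_sum coeff_monom)
  also have "\<dots> = of_nat (card {S \<in> ?I. card S = k})"
    using fin by (simp add: sum.If_cases) (rule arg_cong[where f = card], auto)
  also have "{S \<in> ?I. card S = k} = indep_sets n E k"
    unfolding indep_sets_def by auto
  finally show ?thesis .
qed

lemma indep_sets_0: "indep_sets n E 0 = {{}}"
  unfolding indep_sets_def independent_set_def
  by (auto dest: finite_subset[OF _ finite_atLeastLessThan])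

lemma indep_poly_nonzero: "indep_poly n E \<noteq> 0"
proof -
  have "coeff (indep_poly n E) 0 = 1"
    by (simp add: coeff_indep_poly indep_sets_0)
  thus ?thesis by auto
qed

lemma card_independent_le_degree:
  assumes "S \<subseteq> {0..<n}" "independent_set E S"
  shows "card S \<le> degree (indep_poly n E)"
proof (rule le_degree)
  have "S \<in> indep_sets n E (card S)" using assms unfolding indep_sets_def by auto
  hence "card (indep_sets n E (card S)) \<noteq> 0" using finite_indep_sets by (metis card_0_eq empty_iff)
  thus "coeff (indep_poly n E) (card S) \<noteq> 0" by (simp add: coeff_indep_poly)
qed

lemma lead_coeff_indep_poly_ge_1: "1 \<le> norm (lead_coeff (indep_poly n E))"
proof -
  have "lead_coeff (indep_poly n E) \<noteq> 0"
    using indep_poly_nonzero by simp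
  thus ?thesis by (simp add: coeff_indep_poly)
qed

definition walk :: "('a \<Rightarrow> 'a \<Rightarrow> bool) \<Rightarrow> (nat \<Rightarrow> 'a) \<Rightarrow> nat \<Rightarrow> bool" where
  "walk E f l \<longleftrightarrow> (\<forall>k<l. E (f k) (f (Suc k)))"

definition closed_walk :: "('a \<Rightarrow> 'a \<Rightarrow> bool) \<Rightarrow> (nat \<Rightarrow> 'a) \<Rightarrow> nat \<Rightarrow> bool" where
  "closed_walk E f l \<longleftrightarrow> 0 < l \<and> walk E f (l - 1) \<and> E (f (l - 1)) (f 0)"

lemma rtranclp_imp_walk:
  "E\<^sup>*\<^sup>* a v \<Longrightarrow> \<exists>f l. f 0 = a \<and> f l = v \<and> walk E f l"
proof (induction rule: rtranclp_induct)
  case base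
  show ?case by (rule exI[of _ "\<lambda>_. a"], rule exI[of _ 0]) (simp add: walk_def)
next
  case (step b c)
  then obtain f l where f: "f 0 = a" "f l = b" "walk E f l" by blast
  have "walk E (f(Suc l := c)) (Suc l)"
    using f(2,3) step.hyps(2) by (auto simp: walk_def less_Suc_eq)
  moreover have "(f(Suc l := c)) 0 = a" "(f(Suc l := c)) (Suc l) = c" using f(1) by auto
  ultimately show ?case by blast
qed

lemma injective_odd_closed_walk_has_cycle:
  assumes irrefl: "\<forall>v. \<not> E v v" and cw: "closed_walk E f l" and "odd l"
    and inj: "inj_on f {..<l}"
  shows "has_cycle E"
proof -
  have "l \<noteq> 1" using cw irrefl unfolding closed_walk_def by auto
  with cw \<open>odd l\<close> have l3: "3 \<le> l" unfolding closed_walk_def by presburger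
  show ?thesis unfolding has_cycle_def
  proof (intro exI[of _ "map f [0..<l]"] conjI allI impI)
    show "distinct (map f [0..<l])" using inj by (simp add: distinct_map atLeast0LessThan)
    show "E (last (map f [0..<l])) (hd (map f [0..<l]))"
      using cw l3 by (simp add: closed_walk_def last_map hd_map)
  qed (use cw l3 in \<open>auto simp: closed_walk_def walk_def\<close>)
qed

lemma closed_walk_segment:
  assumes cw: "closed_walk E f l" and ij: "i < j" "j < l" "f i = f j"
  shows "closed_walk E (\<lambda>k. f (i + k)) (j - i)"
proof -
  have w: "\<And>k. k < l - 1 \<Longrightarrow> E (f k) (f (Suc k))"
    using cw unfolding closed_walk_def walk_def by simp
  have "E (f (i + (j - i - 1))) (f (i + 0))"
    using w[of "j - 1"] ij by (simp add: Suc_diff_Suc)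
  thus ?thesis using w ij unfolding closed_walk_def walk_def by auto
qed

lemma closed_walk_excise:
  assumes cw: "closed_walk E f l" and ij: "i < j" "j < l" "f i = f j"
  shows "closed_walk E (\<lambda>k. if k < i then f k else f (k + (j - i))) (l - (j - i))"
    (is "closed_walk E ?g _")
proof -
  have w: "\<And>k. k < l - 1 \<Longrightarrow> E (f k) (f (Suc k))" and c: "E (f (l - 1)) (f 0)"
    using cw unfolding closed_walk_def walk_def by auto
  have "E (?g k) (?g (Suc k))" if k: "k < l - (j - i) - 1" for k
  proof -
    consider "Suc k < i" | "Suc k = i" | "i \<le> k" by linarith
    thus ?thesis
    proof cases
      case 2
      thus ?thesis using w[of k] ij by auto
    next
      case 3
      thus ?thesis using w[of "k + (j - i)"] k by auto
    qed (use w[of k] ij in auto)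
  qed
  moreover have "?g (l - (j - i) - 1) = f (l - 1)" "?g 0 = f 0" using ij by auto
  ultimately show ?thesis using ij c unfolding closed_walk_def walk_def by auto
qed

text \<open>An odd closed walk that repeats a vertex splits there into two shorter closed
  walks, one of which is odd.\<close>
lemma odd_closed_walk_has_cycle:
  assumes irrefl: "\<forall>v. \<not> E v v"
  shows "closed_walk E f l \<Longrightarrow> odd l \<Longrightarrow> has_cycle E"
proof (induction l arbitrary: f rule: less_induct)
  case (less l f)
  show ?case
  proof (cases "inj_on f {..<l}")
    case True
    with less.prems show ?thesis by (rule injective_odd_closed_walk_has_cycle[of E, OF irrefl])
  next
    case False
    then obtain i j where ij: "i < j" "j < l" "f i = f j"
      unfolding inj_on_def by (metis lessThan_iff nat_neq_iff)
    have "odd (j - i) \<or> odd (l - (j - i))" using less.prems(2) ij by auto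
    moreover have "j - i < l" "l - (j - i) < l" using ij by auto
    ultimately show ?thesis
      using less.IH closed_walk_segment[OF less.prems(1) ij] closed_walk_excise[OF less.prems(1) ij]
      by blast
  qed
qed


text \<open>Walks from a common vertex to u and to v, of equal parity, close up through an
  edge uv into an odd closed walk.\<close>
lemma adjacent_endpoints_of_walks_differ_in_parity:
  assumes sym: "\<And>u v. E u v \<Longrightarrow> E v u" and irrefl: "\<forall>v. \<not> E v v" and acyclic: "\<not> has_cycle E"
    and f: "f 0 = a" "f lf = u" "walk E f lf"
    and g: "g 0 = a" "g lg = v" "walk E g lg"
    and parity: "even lf = even lg"
  shows "\<not> E u v"
proof
  assume uv: "E u v"
  define h where "h k = (if k \<le> lf then f k else g (lf + 1 + lg - k))" for k
  have "walk E h (lf + lg)"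
    unfolding walk_def
  proof (intro allI impI)
    fix k assume k: "k < lf + lg"
    consider "k < lf" | "k = lf" | "lf < k" by linarith
    then show "E (h k) (h (Suc k))"
    proof cases
      case 1
      thus ?thesis using f(3) unfolding h_def walk_def by auto
    next
      case 2
      thus ?thesis using f(2) g(2) uv unfolding h_def by auto
    next
      case 3
      define m where "m = lf + lg - k"
      have "h k = g (Suc m)" "h (Suc k) = g m" "m < lg"
        unfolding h_def m_def using 3 k by (auto simp: Suc_diff_le)
      thus ?thesis using g(3) sym[of "g m" "g (Suc m)"] unfolding walk_def by auto
    qed
  qed
  moreover have "E (h (lf + lg)) (h 0)"
  proof (cases "lg = 0")
    case True
    thus ?thesis unfolding h_def using f g uv by auto
  next
    case False
    hence "h (lf + lg) = g 1" "h 0 = g 0" unfolding h_def using f(1) g(1) by auto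
    thus ?thesis using g(3) False sym[of "g 0" "g 1"] unfolding walk_def by auto
  qed
  ultimately have "closed_walk E h (lf + 1 + lg)" unfolding closed_walk_def by simp
  moreover have "odd (lf + 1 + lg)" using parity by auto
  ultimately show False using odd_closed_walk_has_cycle[of E, OF irrefl] acyclic by blast
qed

text \<open>Colour each vertex by the parity of some walk to it from vertex 0; by the previous lemma
  both colour classes are independent.\<close>
lemma tree_has_large_independent_set:
  assumes tree: "is_tree n E" and n: "1 \<le> n"
  obtains X where "X \<subseteq> {0..<n}" "independent_set E X" "n \<le> 2 * card X"
proof -
  have sym: "\<And>u v. E u v \<Longrightarrow> E v u" and irrefl: "\<forall>v. \<not> E v v" and acyclic: "\<not> has_cycle E"
    and connected: "connected_graph n E"
    using tree unfolding is_tree_def simple_graph_def by auto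
  define depth where "depth v = (SOME l. \<exists>f. f 0 = 0 \<and> f l = v \<and> walk E f l)" for v
  have walk_depth: "\<exists>f. f 0 = 0 \<and> f (depth v) = v \<and> walk E f (depth v)" if "v < n" for v
  proof -
    have "E\<^sup>*\<^sup>* 0 v" using connected n that unfolding connected_graph_def by simp
    from rtranclp_imp_walk[OF this] have "\<exists>l f. f 0 = 0 \<and> f l = v \<and> walk E f l" by blast
    from someI_ex[OF this] show ?thesis unfolding depth_def .
  qed
  have not_adj: "\<not> E u v"
    if u: "u < n" and v: "v < n" and parity: "even (depth u) = even (depth v)" for u v
  proof -
    obtain f g where "f 0 = 0" "f (depth u) = u" "walk E f (depth u)"
      and "g 0 = 0" "g (depth v) = v" "walk E g (depth v)"
      using walk_depth[OF u] walk_depth[OF v] by blast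
    from adjacent_endpoints_of_walks_differ_in_parity[OF sym irrefl acyclic this parity]
    show ?thesis .
  qed
  define X0 where "X0 = {v \<in> {0..<n}. even (depth v)}"
  define X1 where "X1 = {v \<in> {0..<n}. odd (depth v)}"
  have indep: "independent_set E X0" "independent_set E X1"
    unfolding independent_set_def X0_def X1_def using not_adj by auto
  have sub: "X0 \<subseteq> {0..<n}" "X1 \<subseteq> {0..<n}" unfolding X0_def X1_def by auto
  have "card X0 + card X1 = card (X0 \<union> X1)"
    by (rule card_Un_disjoint[symmetric]) (auto simp: X0_def X1_def)
  also have "X0 \<union> X1 = {0..<n}" unfolding X0_def X1_def by auto
  finally have card_sum: "card X0 + card X1 = n" by simp
  show thesis
  proof (cases "n \<le> 2 * card X0")
    case True
    thus thesis by (rule that[OF sub(1) indep(1)])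
  next
    case False
    hence "n \<le> 2 * card X1" using card_sum by linarith
    thus thesis by (rule that[OF sub(2) indep(2)])
  qed
qed


text \<open>Given an independent set X, an independent set of size a - j is determined by its trace T
  outside X together with a set of a - j - |T| vertices of X avoiding the neighbours of T;
  there are at most a - |T| such vertices, since together with T they form an independent
  set, so the second choice is among at most n^j possibilities.\<close>
lemma card_indep_sets_with_trace_le:
  assumes X: "X \<subseteq> {0..<n}" "independent_set E X"
    and alpha: "\<And>S. S \<subseteq> {0..<n} \<Longrightarrow> independent_set E S \<Longrightarrow> card S \<le> a"
    and j: "j \<le> a" and n: "1 \<le> n" and T: "T \<subseteq> {0..<n} - X"
  shows "card {S \<in> indep_sets n E (a - j). S \<inter> ({0..<n} - X) = T} \<le> n ^ j"
    (is "card ?G \<le> _")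
proof (cases "?G = {}")
  case True
  show ?thesis unfolding True by simp
next
  case False
  then obtain S0 where S0: "S0 \<in> ?G" by blast
  define XT where "XT = {x \<in> X. \<forall>t\<in>T. \<not> E x t \<and> \<not> E t x}"
  have finT: "finite T" using T by (rule finite_subset) simp
  have finXT: "finite XT" using X(1) unfolding XT_def by (simp add: finite_subset)
  have XT_n: "XT \<subseteq> {0..<n}" using X(1) unfolding XT_def by auto
  have S_split: "S = (S \<inter> X) \<union> T" "card S = card (S \<inter> X) + card T" "S \<inter> X \<subseteq> XT"
    if "S \<in> ?G" for S
  proof -
    have S: "S \<subseteq> {0..<n}" "independent_set E S" "S \<inter> ({0..<n} - X) = T"
      using that unfolding indep_sets_def by auto
    show "S = (S \<inter> X) \<union> T" using S(1,3) by auto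
    have "finite S" using S(1) finite_subset by blast
    hence "card ((S \<inter> X) \<union> T) = card (S \<inter> X) + card T"
      using finT S(3) by (intro card_Un_disjoint) auto
    thus "card S = card (S \<inter> X) + card T" using \<open>S = (S \<inter> X) \<union> T\<close> by simp
    show "S \<inter> X \<subseteq> XT" using S(2,3) unfolding XT_def independent_set_def by blast
  qed
  define b where "b = card (S0 \<inter> X)"
  have size: "a - j = b + card T"
    using S_split(2)[OF S0] S0 unfolding b_def indep_sets_def by simp
  have "card XT + card T \<le> a"
  proof -
    have "XT \<union> T \<subseteq> {0..<n}" using X(1) T unfolding XT_def by auto
    moreover have "independent_set E (XT \<union> T)"
      using X(2) S0 unfolding independent_set_def indep_sets_def XT_def by blast
    ultimately have "card (XT \<union> T) \<le> a" by (rule alpha)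
    moreover have "XT \<inter> T = {}" using T unfolding XT_def by auto
    ultimately show ?thesis using card_Un_disjoint[OF finXT finT] by simp
  qed
  hence exponent: "card XT - b \<le> j" using size j by linarith
  have "inj_on (\<lambda>S. S \<inter> X) ?G"
  proof (rule inj_onI)
    fix S S' assume "S \<in> ?G" "S' \<in> ?G" "S \<inter> X = S' \<inter> X"
    thus "S = S'" using S_split(1) by metis
  qed
  moreover have "(\<lambda>S. S \<inter> X) ` ?G \<subseteq> {U. U \<subseteq> XT \<and> card U = b}"
    using S_split(2,3) size unfolding indep_sets_def by auto
  ultimately have "card ?G \<le> card {U. U \<subseteq> XT \<and> card U = b}"
    by (intro card_inj_on_le) (auto simp: finXT)
  also have "\<dots> = card XT choose b" using n_subsets[OF finXT] by simp
  also have "\<dots> = card XT choose (card XT - b)"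
    using S_split(3)[OF S0] finXT unfolding b_def by (intro binomial_symmetric card_mono)
  also have "\<dots> \<le> card XT ^ (card XT - b)" by (rule binomial_le_pow) simp
  also have "\<dots> \<le> n ^ (card XT - b)"
    using card_mono[OF _ XT_n] by (intro power_mono) auto
  also have "\<dots> \<le> n ^ j" using exponent n by (intro power_increasing)
  finally show ?thesis .
qed

lemma card_indep_sets_le:
  assumes X: "X \<subseteq> {0..<n}" "independent_set E X"
    and alpha: "\<And>S. S \<subseteq> {0..<n} \<Longrightarrow> independent_set E S \<Longrightarrow> card S \<le> a"
    and j: "j \<le> a" and n: "1 \<le> n"
  shows "card (indep_sets n E (a - j)) \<le> 2 ^ (n - card X) * n ^ j"
proof -
  define Y where "Y = {0..<n} - X"
  define G where "G T = {S \<in> indep_sets n E (a - j). S \<inter> Y = T}" for T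
  have finY: "finite Y" unfolding Y_def by simp
  have "indep_sets n E (a - j) = (\<Union>T\<in>Pow Y. G T)"
    unfolding G_def Y_def indep_sets_def by auto
  hence "card (indep_sets n E (a - j)) \<le> (\<Sum>T\<in>Pow Y. card (G T))"
    by (simp add: card_UN_le finY)
  also have "\<dots> \<le> (\<Sum>T\<in>Pow Y. n ^ j)"
    using card_indep_sets_with_trace_le[OF X alpha j n]
    unfolding G_def Y_def by (intro sum_mono) auto
  also have "\<dots> = 2 ^ card Y * n ^ j" using finY by (simp add: card_Pow)
  also have "card Y = n - card X"
    unfolding Y_def using X(1) by (simp add: card_Diff_subset finite_subset)
  finally show ?thesis .
qed

lemma sum_mixed_powers_le:
  fixes N R :: real
  assumes N: "0 \<le> N" and NR: "2 * N \<le> R"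
  shows "(\<Sum>k<d. N ^ (d - k) * R ^ k) * R \<le> 2 * N * R ^ d"
proof (induction d)
  case (Suc d)
  have "(\<Sum>k<Suc d. N ^ (Suc d - k) * R ^ k) * R
      = N * ((\<Sum>k<d. N ^ (d - k) * R ^ k) * R) + N * R ^ d * R"
    by (simp add: Suc_diff_le sum_distrib_left algebra_simps)
  also have "\<dots> \<le> N * (2 * N * R ^ d) + N * R ^ d * R"
    using Suc N by (intro add_right_mono mult_left_mono)
  also have "\<dots> \<le> N * (R * R ^ d) + N * R ^ d * R"
    using NR N by (intro add_right_mono mult_left_mono mult_right_mono) auto
  also have "\<dots> = 2 * N * R ^ Suc d" by (simp add: algebra_simps)
  finally show ?case .
qed (use N in simp)

text \<open>For norm z > 2 N A the leading term dominates: the lower terms sum to less than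
  norm z ^ d by comparison with a geometric series of ratio 1/2.\<close>
lemma norm_root_le:
  fixes p :: "'a::real_normed_field poly"
  assumes lead: "1 \<le> norm (lead_coeff p)"
    and coeffs: "\<And>k. k < degree p \<Longrightarrow> norm (coeff p k) \<le> A * N ^ (degree p - k)"
    and A: "1 \<le> A" and N: "0 \<le> N" and root: "poly p z = 0"
  shows "norm z \<le> 2 * N * A"
proof (rule ccontr)
  assume "\<not> ?thesis"
  hence big: "2 * N * A < norm z" by simp
  define R where "R = norm z"
  define d where "d = degree p"
  have "2 * N \<le> 2 * N * A" using A N mult_left_mono[of 1 A N] by simp
  hence R: "0 < R" "2 * N \<le> R" using big N unfolding R_def by linarith+
  have "(\<Sum>i<d. coeff p i * z ^ i) + coeff p d * z ^ d = 0"
    using root unfolding poly_altdef d_def by (simp add: lessThan_Suc_atMost[symmetric])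
  hence top: "coeff p d * z ^ d = - (\<Sum>i<d. coeff p i * z ^ i)"
    by (metis add.commute eq_neg_iff_add_eq_0)
  have "R ^ d \<le> norm (coeff p d) * R ^ d" using lead R(1) unfolding d_def by simp
  also have "\<dots> = norm (\<Sum>i<d. coeff p i * z ^ i)"
    using arg_cong[OF top, of norm] by (simp add: norm_mult norm_power R_def)
  also have "\<dots> \<le> (\<Sum>i<d. norm (coeff p i) * R ^ i)"
    by (rule order_trans[OF norm_sum]) (simp add: norm_mult norm_power R_def)
  also have "\<dots> \<le> (\<Sum>i<d. A * N ^ (d - i) * R ^ i)"
    by (rule sum_mono) (use coeffs R(1) in \<open>auto intro!: mult_right_mono simp: d_def\<close>)
  also have "\<dots> = A * (\<Sum>i<d. N ^ (d - i) * R ^ i)"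
    by (simp add: sum_distrib_left mult.assoc)
  finally have "R ^ d * R \<le> A * ((\<Sum>i<d. N ^ (d - i) * R ^ i) * R)"
    using R(1) by (simp add: mult_right_mono mult.assoc)
  also have "\<dots> \<le> A * (2 * N * R ^ d)"
    using sum_mixed_powers_le[OF N R(2)] A by (intro mult_left_mono) auto
  finally have "R \<le> 2 * N * A" using R(1) by (simp add: mult.commute)
  thus False using big unfolding R_def by simp
qed

lemma tree_indep_root_norm_le:
  assumes tree: "is_tree n E" and n: "1 \<le> n" and root: "poly (indep_poly n E) z = 0"
  shows "cmod z \<le> 2 * real n * 2 powr (real n / 2)"
proof -
  obtain X where X: "X \<subseteq> {0..<n}" "independent_set E X" "n \<le> 2 * card X"
    using tree_has_large_independent_set[OF tree n] by blast
  let ?a = "degree (indep_poly n E)"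
  have coeffs: "norm (coeff (indep_poly n E) k) \<le> 2 ^ (n - card X) * real n ^ (?a - k)"
    if "k < ?a" for k
  proof -
    have "card (indep_sets n E (?a - (?a - k))) \<le> 2 ^ (n - card X) * n ^ (?a - k)"
      using X(1,2) card_independent_le_degree n by (intro card_indep_sets_le) auto
    moreover have "?a - (?a - k) = k" using that by simp
    ultimately have "real (card (indep_sets n E k)) \<le> real (2 ^ (n - card X) * n ^ (?a - k))"
      by (simp only: of_nat_le_iff)
    thus ?thesis by (simp add: coeff_indep_poly)
  qed
  have "cmod z \<le> 2 * real n * 2 ^ (n - card X)"
    by (rule norm_root_le[OF lead_coeff_indep_poly_ge_1 coeffs _ _ root]) auto
  also have "(2::real) ^ (n - card X) \<le> 2 powr (real n / 2)"
    using X(3) by (simp add: powr_realpow[symmetric])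
  finally show ?thesis using n by (simp add: mult_left_mono)
qed


definition parent_graph :: "nat \<Rightarrow> (nat \<Rightarrow> nat) \<Rightarrow> nat \<Rightarrow> nat \<Rightarrow> bool" where
  "parent_graph n par u v \<longleftrightarrow> u < n \<and> v < n \<and> ((0 < u \<and> v = par u) \<or> (0 < v \<and> u = par v))"

lemma has_cycle_imp_two_neighbours:
  assumes cycle: "has_cycle E" and sym: "\<And>u v. E u v \<Longrightarrow> E v u"
  obtains C where "finite C" "C \<noteq> {}" "\<forall>x\<in>C. \<exists>y\<in>C. \<exists>y'\<in>C. y \<noteq> y' \<and> E x y \<and> E x y'"
proof -
  obtain vs where vs: "length vs \<ge> 3" "distinct vs"
      "\<forall>i. Suc i < length vs \<longrightarrow> E (vs ! i) (vs ! Suc i)" "E (last vs) (hd vs)"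
    using cycle unfolding has_cycle_def by blast
  define L where "L = length vs"
  have L: "3 \<le> L" using vs(1) L_def by simp
  have "vs \<noteq> []" using vs(1) by auto
  hence closing: "E (vs ! (L - 1)) (vs ! 0)"
    using vs(4) by (simp add: hd_conv_nth last_conv_nth L_def)
  have step: "\<And>i. Suc i < L \<Longrightarrow> E (vs ! i) (vs ! Suc i)" using vs(3) L_def by auto
  have neq: "\<And>a b. a < L \<Longrightarrow> b < L \<Longrightarrow> a \<noteq> b \<Longrightarrow> vs ! a \<noteq> vs ! b"
    using vs(2) by (simp add: nth_eq_iff_index_eq L_def)
  have mem: "\<And>a. a < L \<Longrightarrow> vs ! a \<in> set vs" by (simp add: L_def)
  have "\<exists>y\<in>set vs. \<exists>y'\<in>set vs. y \<noteq> y' \<and> E (vs ! i) y \<and> E (vs ! i) y'" if i: "i < L" for i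
  proof -
    consider "i = 0" | "0 < i \<and> i < L - 1" | "i = L - 1" using i by linarith
    then obtain a b where "a < L" "b < L" "a \<noteq> b" "E (vs ! i) (vs ! a)" "E (vs ! i) (vs ! b)"
    proof cases
      case 1
      with that[of 1 "L - 1"] show ?thesis
        using step[of 0] sym[OF closing] L by auto
    next
      case 2
      with that[of "i - 1" "i + 1"] show ?thesis
        using step[of "i - 1"] sym[of "vs ! (i - 1)" "vs ! i"] step[of i] by auto
    next
      case 3
      with that[of "L - 2" 0] show ?thesis
        using step[of "L - 2"] sym[of "vs ! (L - 2)" "vs ! (L - 1)"] closing L
        by (auto simp: Suc_diff_Suc numeral_2_eq_2)
    qed
    thus ?thesis using mem neq by blast
  qed
  hence "\<forall>x\<in>set vs. \<exists>y\<in>set vs. \<exists>y'\<in>set vs. y \<noteq> y' \<and> E x y \<and> E x y'"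
    by (auto simp: in_set_conv_nth L_def)
  moreover have "set vs \<noteq> {}" using vs(1) by auto
  ultimately show ?thesis using that by blast
qed

text \<open>On a cycle of a parent graph, the largest vertex would need two distinct smaller
  neighbours, but its only smaller neighbour is its parent.\<close>
lemma parent_graph_is_tree:
  assumes par: "\<And>w. 0 < w \<Longrightarrow> w < n \<Longrightarrow> par w < w"
  shows "is_tree n (parent_graph n par)"
proof -
  let ?E = "parent_graph n par"
  have sym: "\<And>u v. ?E u v \<Longrightarrow> ?E v u" unfolding parent_graph_def by auto
  have irrefl: "\<not> ?E v v" for v
    using par[of v] unfolding parent_graph_def by auto
  have "simple_graph n ?E"
    unfolding simple_graph_def using sym irrefl by (auto simp: parent_graph_def)
  moreover have root: "?E\<^sup>*\<^sup>* v 0 \<and> ?E\<^sup>*\<^sup>* 0 v" if "v < n" for v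
    using that
  proof (induction v rule: less_induct)
    case (less v)
    show ?case
    proof (cases "v = 0")
      case False
      hence "par v < v" using par less.prems by auto
      hence IH: "?E\<^sup>*\<^sup>* (par v) 0 \<and> ?E\<^sup>*\<^sup>* 0 (par v)" using less.IH less.prems by simp
      have "?E v (par v)" "?E (par v) v"
        unfolding parent_graph_def using False less.prems \<open>par v < v\<close> by auto
      thus ?thesis using IH
        by (meson converse_rtranclp_into_rtranclp rtranclp.rtrancl_into_rtrancl)
    qed simp
  qed
  have "connected_graph n ?E" unfolding connected_graph_def
    using root by (meson rtranclp_trans)
  moreover have "\<not> has_cycle ?E"
  proof
    assume "has_cycle ?E"
    then obtain C where C: "finite C" "C \<noteq> {}"
      "\<forall>x\<in>C. \<exists>y\<in>C. \<exists>y'\<in>C. y \<noteq> y' \<and> ?E x y \<and> ?E x y'"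
      using has_cycle_imp_two_neighbours[of ?E] sym by blast
    define x where "x = Max C"
    have "x \<in> C" using C x_def by auto
    then obtain y y' where yy: "y \<in> C" "y' \<in> C" "y \<noteq> y'" "?E x y" "?E x y'"
      using C(3) by blast
    have to_parent: "y = par x" if "y \<in> C" "?E x y" for y
    proof -
      have "y \<le> x" using C that(1) unfolding x_def by auto
      moreover have "\<not> (0 < y \<and> x = par y)"
        using par[of y] that(2) \<open>y \<le> x\<close> unfolding parent_graph_def by auto
      ultimately show ?thesis using that(2) unfolding parent_graph_def by auto
    qed
    show False using to_parent[OF yy(1,4)] to_parent[OF yy(2,5)] yy(3) by simp
  qed
  ultimately show ?thesis unfolding is_tree_def by blast
qed

lemma independent_set_parent_graph_iff:
  assumes "S \<subseteq> {0..<n}"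
  shows "independent_set (parent_graph n par) S \<longleftrightarrow> (\<forall>w\<in>S. 0 < w \<longrightarrow> par w \<notin> S)"
proof
  assume "independent_set (parent_graph n par) S"
  thus "\<forall>w\<in>S. 0 < w \<longrightarrow> par w \<notin> S"
    using assms unfolding independent_set_def parent_graph_def by fastforce
qed (auto simp: independent_set_def parent_graph_def)

text \<open>The spider with centre 0, legs 0 - i - (m + i) for 1 \<le> i \<le> m, and the remaining vertices
  2m < w < n attached as leaves to vertex 1.\<close>
definition spider_parent :: "nat \<Rightarrow> nat \<Rightarrow> nat" where
  "spider_parent m w = (if w \<le> m then 0 else if w \<le> 2 * m then w - m else 1)"

abbreviation spider :: "nat \<Rightarrow> nat \<Rightarrow> nat \<Rightarrow> nat \<Rightarrow> bool" where
  "spider n m \<equiv> parent_graph n (spider_parent m)"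

lemma spider_is_tree: "1 \<le> m \<Longrightarrow> is_tree n (spider n m)"
  by (rule parent_graph_is_tree) (auto simp: spider_parent_def)

text \<open>An independent set containing an inner leg vertex i misses the centre and each
  corresponding outer vertex m + i, so it misses more of the set {0} \<union> {m<..<n} than it gains.\<close>
lemma spider_independent_set_meeting_legs:
  assumes m: "1 \<le> m" and mn: "2 * m < n" and S: "S \<subseteq> {0..<n}"
    and indep: "\<forall>w\<in>S. 0 < w \<longrightarrow> spider_parent m w \<notin> S" and A: "S \<inter> {1..m} \<noteq> {}"
  shows "card S < n - m"
proof -
  define St where "St = insert 0 {m<..<n}"
  define A where "A = S \<inter> {1..m}"
  have finS: "finite S" using S finite_subset by blast
  have "(S \<inter> St) \<union> A = S" "(S \<inter> St) \<inter> A = {}"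
    using S unfolding A_def St_def by auto
  hence "card S = card (S \<inter> St) + card A"
    using card_Un_disjoint[of "S \<inter> St" A] finS unfolding A_def by simp
  moreover have "card St = card (S \<inter> St) + card (St - S)"
    unfolding St_def by (subst card_Int_Diff[of _ S]) (auto simp: Int_commute)
  moreover have "card A < card (St - S)"
  proof -
    obtain i0 where "i0 \<in> A" using A unfolding A_def by blast
    hence "i0 \<in> S" "0 < i0" "spider_parent m i0 = 0" unfolding A_def spider_parent_def by auto
    hence "0 \<notin> S" using indep by metis
    hence zero: "0 \<in> St - S" unfolding St_def by simp
    have outer: "i + m \<in> St - S" if "i \<in> A" for i
    proof -
      have "i \<in> S" "1 \<le> i" "i \<le> m" using that unfolding A_def by auto
      moreover have "spider_parent m (i + m) = i" using \<open>1 \<le> i\<close> \<open>i \<le> m\<close>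
        unfolding spider_parent_def by auto
      ultimately show ?thesis using indep mn unfolding St_def by auto
    qed
    have sub: "insert 0 ((\<lambda>i. i + m) ` A) \<subseteq> St - S" using zero outer by blast
    have "0 \<notin> (\<lambda>i. i + m) ` A" using m by auto
    moreover have "inj_on (\<lambda>i. i + m) A" by (auto intro: inj_onI)
    ultimately have "card (insert 0 ((\<lambda>i. i + m) ` A)) = card A + 1"
      using finS unfolding A_def by (simp add: card_image)
    moreover have "finite (St - S)" unfolding St_def by simp
    ultimately show ?thesis using card_mono[OF _ sub] by simp
  qed
  moreover have "card St = n - m" unfolding St_def using mn by simp
  ultimately show ?thesis by linarith
qed

lemma spider_max_independent_set:
  assumes m: "1 \<le> m" and mn: "2 * m < n" and S: "S \<subseteq> {0..<n}"
    and indep: "\<forall>w\<in>S. 0 < w \<longrightarrow> spider_parent m w \<notin> S"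
  shows "card S \<le> n - m" and "card S = n - m \<Longrightarrow> S = insert 0 {m<..<n}"
proof -
  have "card S \<le> n - m \<and> (card S = n - m \<longrightarrow> S = insert 0 {m<..<n})"
  proof (cases "S \<inter> {1..m} = {}")
    case True
    have sub: "S \<subseteq> insert 0 {m<..<n}"
    proof
      fix x assume "x \<in> S"
      hence "x \<notin> {1..m}" "x < n" using True S by auto
      thus "x \<in> insert 0 {m<..<n}" by auto
    qed
    have "card (insert 0 {m<..<n}) = n - m" using mn by simp
    thus ?thesis using card_mono[OF _ sub] card_subset_eq[OF _ sub] by auto
  qed (use spider_independent_set_meeting_legs[OF assms] in auto)
  thus "card S \<le> n - m" "card S = n - m \<Longrightarrow> S = insert 0 {m<..<n}" by auto
qed


lemma spider_max_indep_sets: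
  assumes m: "1 \<le> m" and mn: "2 * m < n"
  shows "indep_sets n (spider n m) (n - m) = {insert 0 {m<..<n}}"
    and "n - m < k \<Longrightarrow> indep_sets n (spider n m) k = {}"
proof -
  have spider_indep: "card S \<le> n - m" "card S = n - m \<Longrightarrow> S = insert 0 {m<..<n}"
    if "S \<in> indep_sets n (spider n m) k" for S k
  proof -
    have S: "S \<subseteq> {0..<n}" "independent_set (spider n m) S"
      using that unfolding indep_sets_def by auto
    hence "\<forall>w\<in>S. 0 < w \<longrightarrow> spider_parent m w \<notin> S"
      using independent_set_parent_graph_iff by blast
    note max = spider_max_independent_set[OF m mn S(1) this]
    show "card S \<le> n - m" by (rule max(1))
    show "card S = n - m \<Longrightarrow> S = insert 0 {m<..<n}" by (rule max(2))
  qed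
  have St_sub: "insert 0 {m<..<n} \<subseteq> {0..<n}" using mn by auto
  have "independent_set (spider n m) (insert 0 {m<..<n})"
    unfolding independent_set_parent_graph_iff[OF St_sub] using m by (auto simp: spider_parent_def)
  hence "insert 0 {m<..<n} \<in> indep_sets n (spider n m) (n - m)"
    using mn St_sub unfolding indep_sets_def by simp
  moreover have "S = insert 0 {m<..<n}" if "S \<in> indep_sets n (spider n m) (n - m)" for S
    using spider_indep(2)[OF that] that unfolding indep_sets_def by simp
  ultimately show "indep_sets n (spider n m) (n - m) = {insert 0 {m<..<n}}" by blast
  show "indep_sets n (spider n m) k = {}" if "n - m < k"
  proof -
    have "S \<notin> indep_sets n (spider n m) k" for S
      using spider_indep(1)[of S k] that unfolding indep_sets_def by auto
    thus ?thesis by blast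
  qed
qed

lemma spider_indep_poly_degree:
  assumes "1 \<le> m" "2 * m < n"
  shows "degree (indep_poly n (spider n m)) = n - m"
    and "coeff (indep_poly n (spider n m)) (n - m) = 1"
proof -
  show "coeff (indep_poly n (spider n m)) (n - m) = 1"
    using spider_max_indep_sets(1)[OF assms] by (simp add: coeff_indep_poly)
  moreover have "degree (indep_poly n (spider n m)) \<le> n - m"
    using spider_max_indep_sets(2)[OF assms] by (intro degree_le) (simp add: coeff_indep_poly)
  ultimately show "degree (indep_poly n (spider n m)) = n - m"
    by (metis le_antisym le_degree zero_neq_one)
qed

text \<open>One independent set of size n - m - 1 for each T \<subseteq> {2..m}: legs i \<ge> 2 contribute
  i or m + i according to T, and m + 1 replaces the centre.\<close>
definition spider_near_max_set :: "nat \<Rightarrow> nat \<Rightarrow> nat set \<Rightarrow> nat set" where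
  "spider_near_max_set m n T =
     insert (m + 1) ({2 * m<..<n} \<union> (\<lambda>i. if i \<in> T then i else m + i) ` {2..m})"

lemma spider_near_max_set_in_indep_sets:
  assumes T: "T \<subseteq> {2..m}" and m: "1 \<le> m" and mn: "2 * m < n"
  shows "spider_near_max_set m n T \<in> indep_sets n (spider n m) (n - m - 1)"
proof -
  define g where "g i = (if i \<in> T then i else m + i)" for i
  have S: "spider_near_max_set m n T = insert (m + 1) ({2 * m<..<n} \<union> g ` {2..m})"
    unfolding spider_near_max_set_def g_def ..
  have sub: "spider_near_max_set m n T \<subseteq> {0..<n}" unfolding S g_def using mn m by auto
  have "spider_parent m w \<notin> spider_near_max_set m n T"
    if "w \<in> spider_near_max_set m n T" "0 < w" for w
    using that T m unfolding S g_def spider_parent_def by (auto split: if_splits)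
  hence indep: "independent_set (spider n m) (spider_near_max_set m n T)"
    by (simp add: independent_set_parent_graph_iff[OF sub])
  have "inj_on g {2..m}" unfolding g_def by (auto intro!: inj_onI split: if_splits)
  hence "card (g ` {2..m}) = m - 1" by (simp add: card_image)
  moreover have "{2 * m<..<n} \<inter> g ` {2..m} = {}" "m + 1 \<notin> {2 * m<..<n} \<union> g ` {2..m}"
    unfolding g_def using m by auto
  ultimately have "card (spider_near_max_set m n T) = n - m - 1"
    unfolding S using mn m by (simp add: card_Un_disjoint)
  thus ?thesis using sub indep unfolding indep_sets_def by simp
qed

lemma spider_near_max_set_inter: "T \<subseteq> {2..m} \<Longrightarrow> spider_near_max_set m n T \<inter> {2..m} = T"
  unfolding spider_near_max_set_def by auto

lemma card_spider_indep_sets_ge: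
  assumes "1 \<le> m" "2 * m < n"
  shows "2 ^ (m - 1) \<le> card (indep_sets n (spider n m) (n - m - 1))"
proof -
  have "inj_on (spider_near_max_set m n) (Pow {2..m})"
    by (rule inj_onI) (metis PowD spider_near_max_set_inter)
  hence "card (Pow {2..m}) \<le> card (indep_sets n (spider n m) (n - m - 1))"
    using spider_near_max_set_in_indep_sets[OF _ assms] finite_indep_sets
    by (intro card_inj_on_le) auto
  thus ?thesis by (simp add: card_Pow)
qed

lemma coeff_prod_mset_linear:
  fixes A :: "'a::comm_ring_1 multiset"
  shows "coeff (\<Prod>x\<in>#A. [:-x, 1:]) (size A) = 1 \<and>
         (\<forall>k>size A. coeff (\<Prod>x\<in>#A. [:-x, 1:]) k = 0) \<and>
         (A \<noteq> {#} \<longrightarrow> coeff (\<Prod>x\<in>#A. [:-x, 1:]) (size A - 1) = - sum_mset A)"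
proof (induction A)
  case (add a A)
  define P where "P = (\<Prod>x\<in>#A. [:-x, 1:])"
  define Q where "Q = (\<Prod>x\<in>#add_mset a A. [:-x, 1:])"
  have IH: "coeff P (size A) = 1" "\<And>k. k > size A \<Longrightarrow> coeff P k = 0"
    "A \<noteq> {#} \<Longrightarrow> coeff P (size A - 1) = - sum_mset A"
    using add.IH unfolding P_def by auto
  have "Q = pCons 0 P - smult a P" unfolding P_def Q_def by simp
  hence coeff_Q: "coeff Q k = (if k = 0 then 0 else coeff P (k - 1)) - a * coeff P k" for k
    by (simp add: coeff_pCons')
  have "coeff Q (size A) = - sum_mset (add_mset a A)"
  proof (cases "A = {#}")
    case True
    thus ?thesis using IH(1) by (simp add: coeff_Q P_def)
  next
    case False
    thus ?thesis using IH(1,3) by (simp add: coeff_Q)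
  qed
  hence "coeff Q (size (add_mset a A)) = 1 \<and> (\<forall>k>size (add_mset a A). coeff Q k = 0) \<and>
      coeff Q (size (add_mset a A) - 1) = - sum_mset (add_mset a A)"
    using IH(1,2) by (simp add: coeff_Q)
  thus ?case unfolding Q_def by blast
qed (simp add: coeff_1)

lemma exists_norm_sum_mset_le:
  fixes R :: "'a::real_normed_vector multiset"
  assumes "R \<noteq> {#}"
  shows "\<exists>z\<in>#R. norm (sum_mset R) \<le> real (size R) * norm z"
proof -
  define M where "M = Max (norm ` set_mset R)"
  have "M \<in> norm ` set_mset R" unfolding M_def using assms by (intro Max_in) auto
  then obtain z where z: "z \<in># R" "norm z = M" by blast
  have "norm (sum_mset R) \<le> (\<Sum>x\<in>#R. norm x)"
    by (induction R) (auto intro: order_trans[OF norm_triangle_ineq])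
  also have "\<dots> \<le> (\<Sum>x\<in>#R. M)"
    unfolding M_def by (intro sum_mset_mono) auto
  also have "\<dots> = real (size R) * norm z" using z(2) by (simp add: sum_mset_constant)
  finally show ?thesis using z(1) by blast
qed

text \<open>Vieta: the sum of the roots of a monic polynomial of degree d is minus its coefficient
  of x^(d-1), so some root has norm at least that coefficient's norm divided by d.\<close>
lemma monic_poly_has_large_root:
  fixes p :: "complex poly"
  assumes deg: "degree p = d" and d: "1 \<le> d" and monic: "coeff p d = 1"
  obtains z where "poly p z = 0" "norm (coeff p (d - 1)) \<le> real d * norm z"
proof -
  define R where "R = proots p"
  have "p \<noteq> 0" using monic by auto
  have size: "size R = d" unfolding R_def using size_proots_complex deg by simp
  have "smult (lead_coeff p) (\<Prod>x\<in>#R. [:-x, 1:]) = p"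
    unfolding R_def by (rule complex_poly_decompose_multiset)
  hence "p = (\<Prod>x\<in>#R. [:-x, 1:])" using monic deg by simp
  moreover have "R \<noteq> {#}" using size d by auto
  ultimately have "coeff p (d - 1) = - sum_mset R"
    using coeff_prod_mset_linear[of R] size by simp
  moreover obtain z where "z \<in># R" "norm (sum_mset R) \<le> real (size R) * norm z"
    using exists_norm_sum_mset_le[OF \<open>R \<noteq> {#}\<close>] by blast
  moreover have "poly p z = 0" using \<open>z \<in># R\<close> \<open>p \<noteq> 0\<close> unfolding R_def by simp
  ultimately show ?thesis using that size by simp
qed


definition tree_root_norms :: "nat \<Rightarrow> real set" where
  "tree_root_norms n = {cmod z | z E. is_tree n E \<and> poly (indep_poly n E) z = 0}"

lemma finite_tree_root_norms: "finite (tree_root_norms n)"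
proof -
  define G where "G = {E :: nat \<Rightarrow> nat \<Rightarrow> bool. \<forall>u v. E u v \<longrightarrow> u < n \<and> v < n}"
  have "inj_on (\<lambda>E. {(u, v). E u v}) G"
  proof (rule inj_onI)
    fix E E' :: "nat \<Rightarrow> nat \<Rightarrow> bool"
    assume "{(u, v). E u v} = {(u, v). E' u v}"
    thus "E = E'" by (intro ext) (metis case_prod_conv mem_Collect_eq)
  qed
  moreover have "finite ((\<lambda>E. {(u, v). E u v}) ` G)"
    by (rule finite_subset[of _ "Pow ({0..<n} \<times> {0..<n})"]) (auto simp: G_def)
  ultimately have "finite G" using finite_imageD by blast
  moreover have "tree_root_norms n \<subseteq> (\<Union>E\<in>G. cmod ` {z. poly (indep_poly n E) z = 0})"
    unfolding tree_root_norms_def G_def is_tree_def simple_graph_def by blast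
  moreover have "finite (\<Union>E\<in>G. cmod ` {z. poly (indep_poly n E) z = 0})"
    using \<open>finite G\<close> poly_roots_finite[OF indep_poly_nonzero] by blast
  ultimately show ?thesis using finite_subset by blast
qed

lemma M_T_eq_Max: "M_T n = Max (tree_root_norms n)"
  unfolding M_T_def tree_root_norms_def ..

lemma tree_root_norm_le_M_T:
  "is_tree n E \<Longrightarrow> poly (indep_poly n E) z = 0 \<Longrightarrow> cmod z \<le> M_T n"
  unfolding M_T_eq_Max using finite_tree_root_norms
  by (intro Max_ge) (auto simp: tree_root_norms_def)

lemma M_T_upper_bound:
  assumes n: "1 \<le> n" and nonempty: "tree_root_norms n \<noteq> {}"
  shows "M_T n \<le> 2 * real n * 2 powr (real n / 2)"
proof -
  have "M_T n \<in> tree_root_norms n"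
    unfolding M_T_eq_Max using finite_tree_root_norms nonempty by (rule Max_in)
  then obtain z E where "M_T n = cmod z" "is_tree n E" "poly (indep_poly n E) z = 0"
    unfolding tree_root_norms_def by blast
  thus ?thesis using tree_indep_root_norm_le[OF _ n] by simp
qed

lemma M_T_lower_bound:
  assumes n: "3 \<le> n"
  shows "tree_root_norms n \<noteq> {}" and "2 ^ ((n - 1) div 2 - 1) / real n \<le> M_T n"
proof -
  define m where "m = (n - 1) div 2"
  have m: "1 \<le> m" and mn: "2 * m < n" unfolding m_def using n by auto
  let ?p = "indep_poly n (spider n m)"
  have tree: "is_tree n (spider n m)" using spider_is_tree[OF m] .
  have "1 \<le> n - m" using mn by simp
  then obtain z
    where root: "poly ?p z = 0" and z: "norm (coeff ?p (n - m - 1)) \<le> real (n - m) * norm z"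
    by (rule monic_poly_has_large_root[OF spider_indep_poly_degree(1)[OF m mn] _
          spider_indep_poly_degree(2)[OF m mn]])
  have "(2::real) ^ (m - 1) \<le> real (card (indep_sets n (spider n m) (n - m - 1)))"
    using card_spider_indep_sets_ge[OF m mn] by (simp flip: of_nat_le_iff)
  also have "\<dots> = norm (coeff ?p (n - m - 1))" by (simp add: coeff_indep_poly)
  also have "\<dots> \<le> real n * norm z"
    using z by (rule order_trans) (auto intro: mult_right_mono)
  finally have "2 ^ (m - 1) / real n \<le> norm z" using n by (simp add: divide_le_eq mult.commute)
  also have "norm z \<le> M_T n" using tree_root_norm_le_M_T[OF tree root] by simp
  finally show "2 ^ ((n - 1) div 2 - 1) / real n \<le> M_T n" unfolding m_def .
  show "tree_root_norms n \<noteq> {}" using tree root unfolding tree_root_norms_def by blast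
qed

lemma log_M_T_bounds:
  assumes n: "3 \<le> n"
  shows "real n / 2 - 2 - log 2 (real n) \<le> log 2 (M_T n)"
    and "log 2 (M_T n) \<le> real n / 2 + 1 + log 2 (real n)"
proof -
  define m where "m = (n - 1) div 2"
  have lower: "2 ^ (m - 1) / real n \<le> M_T n" and upper: "M_T n \<le> 2 * real n * 2 powr (real n / 2)"
    using M_T_lower_bound[OF n] M_T_upper_bound[of n] n unfolding m_def by auto
  have pos: "0 < real n" "0 < 2 ^ (m - 1) / real n" using n by auto
  have "real n / 2 - 2 - log 2 (real n) \<le> real (m - 1) - log 2 (real n)"
    unfolding m_def using n by linarith
  also have "\<dots> = log 2 (2 ^ (m - 1) / real n)"
    using pos by (simp add: log_divide log_nat_power)
  also have "\<dots> \<le> log 2 (M_T n)" using pos lower by (intro log_mono) auto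
  finally show "real n / 2 - 2 - log 2 (real n) \<le> log 2 (M_T n)" .
  have "0 < M_T n" using pos lower by linarith
  hence "log 2 (M_T n) \<le> log 2 (2 * real n * 2 powr (real n / 2))"
    using upper by (intro log_mono) auto
  also have "\<dots> = real n / 2 + 1 + log 2 (real n)" using pos by (simp add: log_mult)
  finally show "log 2 (M_T n) \<le> real n / 2 + 1 + log 2 (real n)" .
qed

theorem corollary3:
  shows "(\<lambda>n. log 2 (M_T n) / real n) \<longlonglongrightarrow> 1 / 2"
proof (rule tendsto_sandwich)
  show "(\<lambda>n. 1/2 - (2 + log 2 (real n)) / real n) \<longlonglongrightarrow> 1/2" by real_asymp
  show "(\<lambda>n. 1/2 + (1 + log 2 (real n)) / real n) \<longlonglongrightarrow> 1/2" by real_asymp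
  have "1/2 - (2 + log 2 (real n)) / real n \<le> log 2 (M_T n) / real n \<and>
        log 2 (M_T n) / real n \<le> 1/2 + (1 + log 2 (real n)) / real n" if "3 \<le> n" for n
  proof -
    have n: "0 < real n" using that by simp
    have "1/2 - (2 + log 2 (real n)) / real n = (real n / 2 - 2 - log 2 (real n)) / real n"
      "1/2 + (1 + log 2 (real n)) / real n = (real n / 2 + 1 + log 2 (real n)) / real n"
      using n by (simp_all add: field_simps)
    thus ?thesis using log_M_T_bounds[OF that] n by (simp add: divide_right_mono)
  qed
  thus "\<forall>\<^sub>F n in sequentially. 1/2 - (2 + log 2 (real n)) / real n \<le> log 2 (M_T n) / real n"
    and "\<forall>\<^sub>F n in sequentially. log 2 (M_T n) / real n \<le> 1/2 + (1 + log 2 (real n)) / real n"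
    unfolding eventually_sequentially by blast+
qed

end
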